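(* Let $n\geq 2$. For $x\in[0,1]$ let $X^{(x)}_n$ be a random variable taking values in $\{0,1,\ldots,n\}$ with $$P\left(X^{(x)}_n=k\right)=\binom{n}{k}\frac{x^{(k,c(x))}\,(1-x)^{(n-k,c(x))}}{1^{(n,c(x))}},\qquad c(x)=-\frac{\min\{x,1-x\}}{n-1},\quad k\in\{0,\ldots,n\}.$$ Then for all $0\leq x\leq y\leq 1$ we have $X^{(x)}_n\leq_{\mathrm{st}} X^{(y)}_n$.
   Context: For real $z$ and $h$, the rising factorial with increment $h$ is $z^{(0,h)}=1$ and $z^{(m,h)}=z(z+h)\cdots(z+(m-1)h)$ for integers $m\geq 1$. $X^{(x)}_n$ is the number of white balls drawn in $n$ draws from a Pólya urn initially containing $x$ white and $1-x$ black balls with replacement parameter $c(x)$. For random variables $X,Y$, $X\leq_{\mathrm{st}}Y$ (usual stochastic order) means that their distribution functions satisfy $F_X(t)\geq F_Y(t)$ for all $t\in\mathbb{R}$. *)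

theory Defs
  imports Complex_Main
begin

definition rising_fact_h :: "real \<Rightarrow> nat \<Rightarrow> real \<Rightarrow> real" where
  "rising_fact_h z m h = (\<Prod>j<m. z + real j * h)"

definition polya_c :: "nat \<Rightarrow> real \<Rightarrow> real" where
  "polya_c n x = - min x (1 - x) / (real n - 1)"

definition polya_prob :: "nat \<Rightarrow> real \<Rightarrow> nat \<Rightarrow> real" where
  "polya_prob n x k =
     (if k \<le> n then
        real (n choose k) * rising_fact_h x k (polya_c n x)
          * rising_fact_h (1 - x) (n - k) (polya_c n x)
          / rising_fact_h 1 n (polya_c n x)
      else 0)"

definition polya_cdf :: "nat \<Rightarrow> real \<Rightarrow> real \<Rightarrow> real" where
  "polya_cdf n x t = (\<Sum>k\<in>{k. k \<le> n \<and> real k \<le> t}. polya_prob n x k)"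

text \<open>Usual stochastic order between distributions given by distribution functions:
  X \<le>st Y iff F_X(t) \<ge> F_Y(t) for all real t.\<close>
definition st_le :: "(real \<Rightarrow> real) \<Rightarrow> (real \<Rightarrow> real) \<Rightarrow> bool" where
  "st_le F G \<longleftrightarrow> (\<forall>t. F t \<ge> G t)"

end

theory Submission imports Defs begin

text \<open>On \<open>[0, 1/2]\<close> the parameter is \<open>c(x) = -x/(n-1)\<close>, and up to the normalizer the
  probability of \<open>k\<close> factors as \<open>C k * x^k * \<Prod>l<n-k. (1 - x - l x/(n-1))\<close>, where the power
  grows and the product shrinks with \<open>x\<close>. Hence the family has monotone likelihood ratio in
  \<open>k\<close>, which implies the usual stochastic order. The symmetry between \<open>X\<close> at \<open>1 - x\<close> and
  \<open>n - X\<close> at \<open>x\<close> transfers this to \<open>[1/2, 1]\<close>, and the two halves are joined at \<open>x = 1/2\<close>.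
  That the probabilities sum to one is the Chu-Vandermonde identity for rising factorials.\<close>

lemma rising_fact_h_zero: "rising_fact_h z m 0 = z ^ m"
  by (simp add: rising_fact_h_def)

lemma rising_fact_h_pochhammer:
  assumes "h \<noteq> 0"
  shows "rising_fact_h z m h = h ^ m * pochhammer (z / h) m"
proof -
  have "h ^ m * pochhammer (z / h) m = (\<Prod>j<m. h * (z / h + real j))"
    by (simp add: pochhammer_prod lessThan_atLeast0 prod.distrib)
  also have "\<dots> = rising_fact_h z m h"
    unfolding rising_fact_h_def using assms by (intro prod.cong) (auto simp: algebra_simps)
  finally show ?thesis ..
qed

lemma rising_fact_h_binomial_sum:
  "rising_fact_h (a + b) n h
     = (\<Sum>k\<le>n. real (n choose k) * rising_fact_h a k h * rising_fact_h b (n - k) h)"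
proof (cases "h = 0")
  case True
  then show ?thesis by (simp add: rising_fact_h_zero binomial_ring)
next
  case False
  have "rising_fact_h (a + b) n h
      = (\<Sum>k\<le>n. h ^ n * (real (n choose k) * pochhammer (a / h) k * pochhammer (b / h) (n - k)))"
    using False by (simp add: rising_fact_h_pochhammer add_divide_distrib pochhammer_binomial_sum
        sum_distrib_left)
  also have "\<dots> = (\<Sum>k\<le>n. real (n choose k) * rising_fact_h a k h * rising_fact_h b (n - k) h)"
    using False by (intro sum.cong) (auto simp: rising_fact_h_pochhammer power_add[symmetric])
  finally show ?thesis .
qed

text \<open>The likelihood ratio condition is cross-multiplied because the lower-half probability
  of \<open>k = n\<close> vanishes.\<close>

lemma sum_downset_le_of_likelihood_ratio:
  fixes p q :: "nat \<Rightarrow> real"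
  assumes ratio: "\<And>i j. i \<le> j \<Longrightarrow> j \<le> n \<Longrightarrow> p j * q i \<le> p i * q j"
    and "sum p {..n} = 1" and "sum q {..n} = 1"
    and S: "S \<subseteq> {..n}" and down: "\<And>i j. i \<in> S \<Longrightarrow> j \<le> i \<Longrightarrow> j \<in> S"
  shows "sum q S \<le> sum p S"
proof -
  let ?T = "{..n} - S"
  have "sum p ?T * sum q S = (\<Sum>j\<in>?T. \<Sum>i\<in>S. p j * q i)"
    by (simp add: sum_product)
  also have "\<dots> \<le> (\<Sum>j\<in>?T. \<Sum>i\<in>S. p i * q j)"
    by (intro sum_mono ratio) (use down in \<open>auto intro: le_cases\<close>)
  also have "\<dots> = sum p S * sum q ?T"
    by (simp add: sum_product sum.swap[of _ S] mult.commute)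
  finally have "sum p ?T * sum q S \<le> sum p S * sum q ?T" .
  moreover have "sum p ?T = 1 - sum p S" "sum q ?T = 1 - sum q S"
    using sum_diff[of "{..n}" S p] sum_diff[of "{..n}" S q] S assms(2,3) by auto
  ultimately show ?thesis by (simp add: algebra_simps)
qed

lemma power_times_prod_likelihood_ratio:
  fixes g :: "real \<Rightarrow> nat \<Rightarrow> real"
  assumes "0 \<le> x" "x \<le> y" "i \<le> j" "j \<le> n"
    and g: "\<And>l. l < n \<Longrightarrow> 0 \<le> g y l \<and> g y l \<le> g x l"
  shows "(x ^ j * (\<Prod>l<n - j. g x l)) * (y ^ i * (\<Prod>l<n - i. g y l))
       \<le> (x ^ i * (\<Prod>l<n - i. g x l)) * (y ^ j * (\<Prod>l<n - j. g y l))"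
proof -
  have gx: "0 \<le> g x l" if "l < n" for l
    using g[OF that] by linarith
  define d where "d = j - i"
  define R where "R z = (\<Prod>l\<in>{n - j..<n - i}. g z l)" for z
  have split: "(\<Prod>l<n - i. g z l) = (\<Prod>l<n - j. g z l) * R z" for z
    unfolding R_def lessThan_atLeast0 using assms by (simp add: prod.atLeastLessThan_concat)
  have "x ^ d * R y \<le> y ^ d * R x"
    unfolding R_def using assms
    by (intro mult_mono power_mono prod_mono prod_nonneg) (auto dest: g gx)
  moreover have "0 \<le> x ^ i * y ^ i * (\<Prod>l<n - j. g x l) * (\<Prod>l<n - j. g y l)"
    using assms by (intro mult_nonneg_nonneg prod_nonneg zero_le_power) (auto dest: g intro!: gx)
  ultimately have "x ^ i * y ^ i * (\<Prod>l<n - j. g x l) * (\<Prod>l<n - j. g y l) * (x ^ d * R y)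
      \<le> x ^ i * y ^ i * (\<Prod>l<n - j. g x l) * (\<Prod>l<n - j. g y l) * (y ^ d * R x)"
    by (rule mult_left_mono)
  moreover have "j = i + d" using assms unfolding d_def by simp
  ultimately show ?thesis
    unfolding split by (simp add: power_add mult_ac)
qed

lemma polya_c_one_minus: "polya_c n (1 - x) = polya_c n x"
  by (simp add: polya_c_def min.commute)

lemma polya_prob_one_minus:
  assumes "k \<le> n"
  shows "polya_prob n x k = polya_prob n (1 - x) (n - k)"
  using assms unfolding polya_prob_def polya_c_one_minus
  by (simp add: binomial_symmetric[OF assms, symmetric] mult_ac)

lemma polya_normalizer_pos:
  assumes "n \<ge> 2" "0 \<le> x" "x \<le> 1"
  shows "rising_fact_h 1 n (polya_c n x) > 0"
  unfolding rising_fact_h_def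
proof (rule prod_pos)
  fix j assume "j \<in> {..<n}"
  then have "real j \<le> real n - 1"
    by auto
  moreover have "0 \<le> min x (1 - x)" "min x (1 - x) \<le> 1/2"
    using assms by (auto simp: min_def)
  ultimately have "real j * min x (1 - x) \<le> (real n - 1) * (1/2)"
    by (intro mult_mono) auto
  then have "real j * min x (1 - x) / (real n - 1) < 1"
    using assms(1) by (simp add: divide_simps)
  then show "0 < 1 + real j * polya_c n x"
    by (simp add: polya_c_def)
qed

lemma polya_prob_sum:
  assumes "n \<ge> 2" "0 \<le> x" "x \<le> 1"
  shows "sum (polya_prob n x) {..n} = 1"
proof -
  have "sum (polya_prob n x) {..n}
      = (\<Sum>k\<le>n. real (n choose k) * rising_fact_h x k (polya_c n x)
          * rising_fact_h (1 - x) (n - k) (polya_c n x)) / rising_fact_h 1 n (polya_c n x)"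
    by (simp add: polya_prob_def sum_divide_distrib)
  also have "\<dots> = rising_fact_h (x + (1 - x)) n (polya_c n x) / rising_fact_h 1 n (polya_c n x)"
    by (simp only: rising_fact_h_binomial_sum)
  also have "\<dots> = 1"
    using polya_normalizer_pos[OF assms] by simp
  finally show ?thesis .
qed

lemma polya_prob_lower_half:
  assumes "0 \<le> x" "x \<le> 1/2" "k \<le> n"
  shows "polya_prob n x k = real (n choose k) * (\<Prod>j<k. 1 - real j / (real n - 1))
     * (x ^ k * (\<Prod>l<n - k. 1 - x - real l * x / (real n - 1)))
     / rising_fact_h 1 n (polya_c n x)"
proof -
  have c: "polya_c n x = - x / (real n - 1)"
    using assms by (simp add: polya_c_def)
  have "rising_fact_h x k (polya_c n x) = (\<Prod>j<k. x * (1 - real j / (real n - 1)))"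
    unfolding rising_fact_h_def c by (intro prod.cong) (auto simp: algebra_simps)
  moreover have "rising_fact_h (1 - x) (n - k) (polya_c n x)
      = (\<Prod>l<n - k. 1 - x - real l * x / (real n - 1))"
    unfolding rising_fact_h_def c by (intro prod.cong) (auto simp: algebra_simps)
  ultimately show ?thesis
    using assms by (simp add: polya_prob_def prod.distrib mult_ac)
qed

lemma polya_prob_likelihood_ratio_lower_half:
  assumes n: "n \<ge> 2" and "0 \<le> x" "x \<le> y" "y \<le> 1/2" and "i \<le> j" "j \<le> n"
  shows "polya_prob n x j * polya_prob n y i \<le> polya_prob n x i * polya_prob n y j"
proof -
  define C where "C k = real (n choose k) * (\<Prod>j<k. 1 - real j / (real n - 1))" for k
  define g where "g z l = 1 - z - real l * z / (real n - 1)" for z l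
  define W where "W z k = z ^ k * (\<Prod>l<n - k. g z l)" for z k
  define D where "D z = rising_fact_h 1 n (polya_c n z)" for z
  have prob: "polya_prob n z k = C k * W z k / D z" if "0 \<le> z" "z \<le> 1/2" "k \<le> n" for z k
    using polya_prob_lower_half[OF that] unfolding C_def W_def g_def D_def by simp
  have "C k \<ge> 0" if "k \<le> n" for k
    unfolding C_def using that n by (intro mult_nonneg_nonneg prod_nonneg) (auto simp: field_simps)
  moreover have "D z > 0" if "0 \<le> z" "z \<le> 1/2" for z
    unfolding D_def using that by (intro polya_normalizer_pos[OF n]) auto
  ultimately have K: "0 \<le> C i * C j / (D x * D y)"
    using assms by (intro divide_nonneg_pos mult_nonneg_nonneg mult_pos_pos) auto
  have "0 \<le> g y l \<and> g y l \<le> g x l" if "l < n" for l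
  proof
    have "real l \<le> real n - 1"
      using that by linarith
    then have "real l * y \<le> (real n - 1) * y"
      using assms by (intro mult_right_mono) auto
    then have "real l * y / (real n - 1) \<le> y"
      using n by (simp add: divide_simps mult.commute)
    then show "0 \<le> g y l" using assms by (simp add: g_def)
    have "real l * x / (real n - 1) \<le> real l * y / (real n - 1)"
      using assms n by (intro divide_right_mono mult_left_mono) auto
    then show "g y l \<le> g x l"
      using assms by (simp add: g_def)
  qed
  then have "W x j * W y i \<le> W x i * W y j"
    unfolding W_def using assms by (intro power_times_prod_likelihood_ratio) auto
  then have "C i * C j / (D x * D y) * (W x j * W y i) \<le> C i * C j / (D x * D y) * (W x i * W y j)"
    using K by (rule mult_left_mono)
  then show ?thesis
    using assms by (simp add: prob mult_ac)
qed

lemma polya_prob_likelihood_ratio_upper_half: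
  assumes "n \<ge> 2" "1/2 \<le> x" "x \<le> y" "y \<le> 1" and "i \<le> j" "j \<le> n"
  shows "polya_prob n x j * polya_prob n y i \<le> polya_prob n x i * polya_prob n y j"
proof -
  have "polya_prob n (1 - y) (n - i) * polya_prob n (1 - x) (n - j)
      \<le> polya_prob n (1 - y) (n - j) * polya_prob n (1 - x) (n - i)"
    using assms by (intro polya_prob_likelihood_ratio_lower_half) auto
  moreover have "polya_prob n z k = polya_prob n (1 - z) (n - k)" if "k \<le> n" for z k
    using that by (rule polya_prob_one_minus)
  ultimately show ?thesis
    using assms by (metis le_trans mult.commute)
qed

lemma polya_cdf_antimono_within_half:
  assumes "n \<ge> 2" "0 \<le> x" "x \<le> y" "y \<le> 1" and "y \<le> 1/2 \<or> 1/2 \<le> x"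
  shows "polya_cdf n y t \<le> polya_cdf n x t"
  unfolding polya_cdf_def
proof (rule sum_downset_le_of_likelihood_ratio)
  show "polya_prob n x j * polya_prob n y i \<le> polya_prob n x i * polya_prob n y j"
    if "i \<le> j" "j \<le> n" for i j
    using assms(5)
  proof
    assume "y \<le> 1/2"
    then show ?thesis
      using assms that by (intro polya_prob_likelihood_ratio_lower_half) auto
  next
    assume "1/2 \<le> x"
    then show ?thesis
      using assms that by (intro polya_prob_likelihood_ratio_upper_half) auto
  qed
  show "sum (polya_prob n x) {..n} = 1" "sum (polya_prob n y) {..n} = 1"
    using assms by (auto intro: polya_prob_sum)
qed auto

theorem theorem3p2:
  fixes n :: nat and x y :: real
  assumes "n \<ge> 2" and "0 \<le> x" and "x \<le> y" and "y \<le> 1"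
  shows "st_le (polya_cdf n x) (polya_cdf n y)"
  unfolding st_le_def
proof
  fix t
  show "polya_cdf n y t \<le> polya_cdf n x t"
  proof (cases "y \<le> 1/2 \<or> 1/2 \<le> x")
    case True
    then show ?thesis
      using assms by (intro polya_cdf_antimono_within_half) auto
  next
    case False
    then have "polya_cdf n y t \<le> polya_cdf n (1/2) t"
      using assms by (intro polya_cdf_antimono_within_half) auto
    also have "\<dots> \<le> polya_cdf n x t"
      using False assms by (intro polya_cdf_antimono_within_half) auto
    finally show ?thesis .
  qed
qed

end
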